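(* Let $\bm{\Theta}\ni\bm{\theta}\mapsto\bm{P}_{\bm{\theta}}$ be any measurable parameterization of probability measures on $\mathbb{X}^\infty$, let $\bm{\pi}$ be a probability measure on $\bm{\Theta}$, and let $\bm{P}(x)=\int\bm{P}_{\bm{\theta}}(x)\,d\bm{\pi}(\bm{\theta})$. Then $\bm{P}_{\bm{\theta}}(\mathcal{B}_{\bm{P}})=1$ for $\bm{\pi}$-almost all $\bm{\theta}\in\bm{\Theta}$.
   Context: $\mathbb{X}$ is a countable alphabet, $\mathbb{Y}=\{0,1,\ldots,D-1\}$, $\log$ is logarithm to base $D$, $x^n$ is the length-$n$ prefix of $\bm{x}\in\mathbb{X}^\infty$, and $\bm{P}(x)$ for a string $x$ is the measure of the set of sequences beginning with $x$. $K$ denotes prefix Kolmogorov complexity for a fixed universal prefix machine with programs over $\mathbb{Y}$. $\mathcal{B}_{\bm{P}}$ (the $\bm{P}$-Barron random sequences) is the set of $\bm{x}\in\mathbb{X}^\infty$ such that $K(x^n)+\log\bm{P}(x^n)>0$ for all but finitely many $n\in\mathbb{N}$. *)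

theory Defs
  imports "HOL-Probability.Probability" "HOL-Library.Nat_Bijection" "HOL-Library.Countable"
begin

datatype recf = Zf | Sf | Idf nat | Cnf recf "recf list" | Prf recf recf | Mnf recf

inductive reval :: "recf \<Rightarrow> nat list \<Rightarrow> nat \<Rightarrow> bool" where
  reval_Z: "reval Zf xs 0"
| reval_S: "reval Sf (x # xs) (Suc x)"
| reval_Id: "i < length xs \<Longrightarrow> reval (Idf i) xs (xs ! i)"
| reval_Cn: "list_all2 (\<lambda>g y. reval g xs y) gs ys \<Longrightarrow> reval f ys z \<Longrightarrow> reval (Cnf f gs) xs z"
| reval_Pr0: "reval f xs y \<Longrightarrow> reval (Prf f g) (0 # xs) y"
| reval_PrS: "reval (Prf f g) (n # xs) y \<Longrightarrow> reval g (y # n # xs) z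
              \<Longrightarrow> reval (Prf f g) (Suc n # xs) z"
| reval_Mn: "reval f (n # xs) 0 \<Longrightarrow> (\<forall>m<n. \<exists>y. reval f (m # xs) (Suc y))
              \<Longrightarrow> reval (Mnf f) xs n"

text \<open>Programs are words over Y = {0,...,D-1}, represented as nat lists with entries < D,
  coded by bijective base-D numeration.\<close>

definition ycode :: "nat \<Rightarrow> nat list \<Rightarrow> nat" where
  "ycode D bs = foldr (\<lambda>b n. D * n + b + 1) bs 0"

definition xcode :: "'a::countable list \<Rightarrow> nat" where
  "xcode xs = list_encode (map to_nat xs)"

definition prefix_machine :: "nat \<Rightarrow> (nat list \<Rightarrow> 'a::countable list option) \<Rightarrow> bool" where
  "prefix_machine D M \<longleftrightarrow>
     (\<forall>p. M p \<noteq> None \<longrightarrow> set p \<subseteq> {..<D}) \<and>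
     (\<forall>p r. M p \<noteq> None \<longrightarrow> M (p @ r) \<noteq> None \<longrightarrow> r = []) \<and>
     (\<exists>f. \<forall>p y. set p \<subseteq> {..<D} \<longrightarrow>
            (reval f [ycode D p] y \<longleftrightarrow> (\<exists>x. M p = Some x \<and> y = xcode x)))"

definition universal_prefix_machine :: "nat \<Rightarrow> (nat list \<Rightarrow> 'a::countable list option) \<Rightarrow> bool" where
  "universal_prefix_machine D U \<longleftrightarrow> prefix_machine D U \<and>
     (\<forall>M. prefix_machine D M \<longrightarrow>
        (\<exists>c. \<forall>x p. M p = Some x \<longrightarrow> (\<exists>q. U q = Some x \<and> length q \<le> length p + c)))"

definition Kc :: "(nat list \<Rightarrow> 'a list option) \<Rightarrow> 'a list \<Rightarrow> nat" where
  "Kc U x = (LEAST n. \<exists>p. U p = Some x \<and> length p = n)"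

definition seq_space :: "(nat \<Rightarrow> 'a) measure" where
  "seq_space = PiM UNIV (\<lambda>_::nat. count_space UNIV)"

definition pre :: "(nat \<Rightarrow> 'a) \<Rightarrow> nat \<Rightarrow> 'a list" where
  "pre \<omega> n = map \<omega> [0..<n]"

definition cyl :: "'a list \<Rightarrow> (nat \<Rightarrow> 'a) set" where
  "cyl xs = {\<omega>. pre \<omega> (length xs) = xs}"

text \<open>K(x) + log_D P(x) > 0, with the convention log 0 = -infinity (K is finite).\<close>
definition barron_random :: "nat \<Rightarrow> (nat list \<Rightarrow> 'a list option) \<Rightarrow> ('a list \<Rightarrow> real) \<Rightarrow> (nat \<Rightarrow> 'a) set" where
  "barron_random D U P = {\<omega>. \<forall>\<^sub>F n in sequentially.
       P (pre \<omega> n) > 0 \<and> real (Kc U (pre \<omega> n)) + log (real D) (P (pre \<omega> n)) > 0}"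

end

theory Submission imports Defs begin

text \<open>Call a word x bad if P(x) \<le> D^-K(x). Since shortest programs form a prefix-free set,
  Kraft's inequality bounds the P-mass of all bad words by 1. As P(x) is the \<pi>-average of
  P_\<theta>(x), Tonelli's theorem shows that for \<pi>-almost every \<theta> the expected number of bad
  prefixes of a P_\<theta>-random sequence is finite; by Borel-Cantelli almost every such sequence
  has only finitely many bad prefixes, i.e. it is P-Barron random.\<close>

inductive_cases revalZE: "reval Zf xs y"
inductive_cases revalSE: "reval Sf xs y"
inductive_cases revalIdE: "reval (Idf i) xs y"
inductive_cases revalCnE: "reval (Cnf f gs) xs y"
inductive_cases revalMnE: "reval (Mnf f) xs y"

fun const_recf :: "nat \<Rightarrow> recf" where
  "const_recf 0 = Zf"
| "const_recf (Suc c) = Cnf Sf [const_recf c]"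

lemma reval_Id_iff: "reval (Idf i) xs y \<longleftrightarrow> i < length xs \<and> y = xs ! i"
  by (auto elim: revalIdE intro: reval_Id)

lemma reval_Cn1_iff: "reval (Cnf f [g]) xs y \<longleftrightarrow> (\<exists>z. reval g xs z \<and> reval f [z] y)"
proof
  assume "reval (Cnf f [g]) xs y"
  then show "\<exists>z. reval g xs z \<and> reval f [z] y"
    by (elim revalCnE) (auto simp: list_all2_Cons1)
next
  assume "\<exists>z. reval g xs z \<and> reval f [z] y"
  then obtain z where "reval g xs z" "reval f [z] y" by blast
  then show "reval (Cnf f [g]) xs y" by (intro reval_Cn[where ys="[z]"]) auto
qed

lemma reval_const_recf: "reval (const_recf c) xs y \<longleftrightarrow> y = c"
proof (induction c arbitrary: xs y)
  case 0 then show ?case by (auto elim: revalZE intro: reval_Z)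
next
  case (Suc c)
  have "reval Sf [z] y \<longleftrightarrow> y = Suc z" for z y by (auto elim: revalSE intro: reval_S)
  then show ?case using Suc by (simp add: reval_Cn1_iff)
qed

lemma reval_Mn_Id1: "reval (Mnf (Idf (Suc 0))) [n] m \<longleftrightarrow> n = 0 \<and> m = 0"
proof
  assume "reval (Mnf (Idf (Suc 0))) [n] m"
  then show "n = 0 \<and> m = 0" by (elim revalMnE) (auto simp: reval_Id_iff)
next
  assume "n = 0 \<and> m = 0"
  then show "reval (Mnf (Idf (Suc 0))) [n] m" by (auto intro!: reval_Mn simp: reval_Id_iff)
qed

lemma ycode_eq_0_iff: "ycode D p = 0 \<longleftrightarrow> p = []"
  by (cases p) (auto simp: ycode_def)

text \<open>The machine is computed by the constant xcode x composed with minimisation of the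
  projection onto the input; the latter is defined only at input 0 = ycode D [].\<close>
lemma prefix_machine_const:
  fixes x :: "'a::countable list"
  shows "prefix_machine D (\<lambda>p. if p = [] then Some x else None)"
  unfolding prefix_machine_def
proof (intro conjI)
  let ?f = "Cnf (const_recf (xcode x)) [Mnf (Idf (Suc 0))]"
  have "reval ?f [ycode D p] y \<longleftrightarrow> p = [] \<and> y = xcode x" for p y
    by (simp add: reval_Cn1_iff reval_Mn_Id1 reval_const_recf ycode_eq_0_iff)
  then show "\<exists>f. \<forall>p y. set p \<subseteq> {..<D} \<longrightarrow>
      (reval f [ycode D p] y \<longleftrightarrow> (\<exists>x'. (if p = [] then Some x else None) = Some x' \<and> y = xcode x'))"
    by (intro exI[of _ ?f]) auto
qed auto

lemma universal_prefix_machine_surj: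
  fixes U :: "nat list \<Rightarrow> 'a::countable list option"
  assumes "universal_prefix_machine D U"
  shows "\<exists>q. U q = Some x"
proof -
  from assms prefix_machine_const[of D x] obtain c where
    "\<forall>x' (p::nat list). (if p = [] then Some x else None) = Some x' \<longrightarrow>
        (\<exists>q. U q = Some x' \<and> length q \<le> length p + c)"
    unfolding universal_prefix_machine_def by blast
  from this[rule_format, of "[]" x] show ?thesis by auto
qed

lemma Kc_program:
  fixes U :: "nat list \<Rightarrow> 'a::countable list option"
  assumes "universal_prefix_machine D U"
  shows "\<exists>p. U p = Some x \<and> length p = Kc U x"
proof -
  obtain q where "U q = Some x" using universal_prefix_machine_surj[OF assms] by blast
  then have "\<exists>n p. U p = Some x \<and> length p = n" by blast
  from LeastI_ex[OF this] show ?thesis unfolding Kc_def .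
qed

section \<open>Kraft's inequality\<close>

lemma kraft_inequality:
  fixes Q :: "nat list set" and D :: nat
  assumes fin: "finite Q" and D: "D \<ge> 1"
    and alph: "\<forall>q\<in>Q. set q \<subseteq> {..<D}"
    and prefix_free: "\<forall>q\<in>Q. \<forall>q'\<in>Q. \<forall>r. q @ r = q' \<longrightarrow> r = []"
  shows "(\<Sum>q\<in>Q. (1/real D)^length q) \<le> 1"
proof (cases "Q = {}")
  case True then show ?thesis by simp
next
  case False
  define L where "L = Max (length ` Q)"
  have lenL: "length q \<le> L" if "q \<in> Q" for q
    unfolding L_def using fin that by (intro Max_ge) auto
  define W where "W = {w. set w \<subseteq> {..<D} \<and> length w = L}"
  define E where "E q = (\<lambda>r. q @ r) ` {r. set r \<subseteq> {..<D} \<and> length r = L - length q}" for q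
  have finW: "finite W" unfolding W_def by (rule finite_lists_length_eq) auto
  have cardW: "card W = D ^ L" unfolding W_def using card_lists_length_eq[of "{..<D}" L] by simp
  have EW: "E q \<subseteq> W" if "q \<in> Q" for q
    using lenL[OF that] alph that unfolding E_def W_def by (auto simp: subset_iff)
  have cardE: "card (E q) = D ^ (L - length q)" for q
  proof -
    have "card (E q) = card {r. set r \<subseteq> {..<D} \<and> length r = L - length q}"
      unfolding E_def by (rule card_image) (auto simp: inj_on_def)
    also have "\<dots> = D ^ (L - length q)" using card_lists_length_eq[of "{..<D}"] by simp
    finally show ?thesis .
  qed
  have disj: "E q \<inter> E q' = {}" if "q \<in> Q" "q' \<in> Q" "q \<noteq> q'" for q q'
  proof (rule ccontr)
    assume "E q \<inter> E q' \<noteq> {}"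
    then obtain r r' where eq: "q @ r = q' @ r'" unfolding E_def by auto
    then obtain s where "q' = q @ s \<or> q = q' @ s"
      by (metis append_eq_append_conv2)
    then show False using prefix_free that by auto
  qed
  have finE: "finite (E q)" if "q \<in> Q" for q using EW[OF that] finW by (rule finite_subset)
  have "(\<Sum>q\<in>Q. D ^ (L - length q)) = card (\<Union>q\<in>Q. E q)"
    using fin disj finW EW by (subst card_UN_disjoint) (auto simp: cardE finE)
  also have "\<dots> \<le> card W" using EW finW by (intro card_mono) auto
  finally have le: "(\<Sum>q\<in>Q. D ^ (L - length q)) \<le> D ^ L" using cardW by simp
  have Dpos: "real D > 0" using D by simp
  have "(\<Sum>q\<in>Q. (1/real D)^length q) = (\<Sum>q\<in>Q. real (D ^ (L - length q)) / real D ^ L)"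
  proof (rule sum.cong)
    fix q assume q: "q \<in> Q"
    have "real D ^ L = real D ^ (L - length q) * real D ^ length q"
      using lenL[OF q] by (simp flip: power_add)
    then show "(1/real D)^length q = real (D ^ (L - length q)) / real D ^ L"
      using Dpos by (simp add: power_one_over field_simps)
  qed simp
  also have "\<dots> = real (\<Sum>q\<in>Q. D ^ (L - length q)) / real D ^ L"
    by (simp add: sum_divide_distrib)
  also have "\<dots> \<le> 1" using le Dpos
    by (metis divide_le_eq_1 of_nat_le_iff of_nat_power zero_less_power)
  finally show ?thesis .
qed

lemma sum_Kc_le_1:
  fixes U :: "nat list \<Rightarrow> 'a::countable list option" and F :: "'a list set"
  assumes U: "universal_prefix_machine D U" and D: "D \<ge> 1" and F: "finite F"
  shows "(\<Sum>x\<in>F. (1/real D)^Kc U x) \<le> 1"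
proof -
  define prog where "prog x = (SOME p. U p = Some x \<and> length p = Kc U x)" for x
  have prog: "U (prog x) = Some x \<and> length (prog x) = Kc U x" for x
    unfolding prog_def by (rule someI_ex) (rule Kc_program[OF U])
  have pm: "prefix_machine D U" using U by (simp add: universal_prefix_machine_def)
  have inj: "inj_on prog F" by (rule inj_onI) (metis prog option.inject)
  have "(\<Sum>x\<in>F. (1/real D)^Kc U x) = (\<Sum>q\<in>prog ` F. (1/real D)^length q)"
    using prog by (simp add: sum.reindex[OF inj])
  also have "\<dots> \<le> 1"
  proof (rule kraft_inequality[OF _ D])
    show "finite (prog ` F)" using F by simp
    show "\<forall>q\<in>prog ` F. set q \<subseteq> {..<D}"
      using pm prog unfolding prefix_machine_def by auto
    show "\<forall>q\<in>prog ` F. \<forall>q'\<in>prog ` F. \<forall>r. q @ r = q' \<longrightarrow> r = []"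
      using pm prog unfolding prefix_machine_def by (metis image_iff option.distinct(1))
  qed
  finally show ?thesis .
qed

lemma nn_integral_count_space_le_finite_sums:
  fixes f :: "'a \<Rightarrow> ennreal"
  assumes A: "countable A" and le: "\<And>F. finite F \<Longrightarrow> F \<subseteq> A \<Longrightarrow> sum f F \<le> c"
  shows "(\<integral>\<^sup>+x. f x \<partial>count_space A) \<le> c"
proof (cases "finite A")
  case True then show ?thesis using le by (simp add: nn_integral_count_space_finite)
next
  case False
  note bij = bij_betw_from_nat_into[OF A False]
  let ?g = "from_nat_into A"
  have "(\<integral>\<^sup>+x. f x \<partial>count_space A) = (\<Sum>n. f (?g n))"
    by (simp flip: nn_integral_bij_count_space[OF bij] add: nn_integral_count_space_nat)
  also have "\<dots> \<le> c"
  proof (rule suminf_le_const)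
    fix n
    have inj: "inj_on ?g {..<n}" using bij by (auto simp: bij_betw_def inj_on_def)
    have "(\<Sum>i<n. f (?g i)) = sum f (?g ` {..<n})" by (simp add: sum.reindex[OF inj])
    also have "\<dots> \<le> c" using bij by (intro le) (auto simp: bij_betw_def)
    finally show "(\<Sum>i<n. f (?g i)) \<le> c" .
  qed simp
  finally show ?thesis .
qed

lemma le_one_over_power_if_not_pos_log:
  fixes b p :: real
  assumes "1 < b" "0 \<le> p" "\<not> (p > 0 \<and> real k + log b p > 0)"
  shows "p \<le> (1/b)^k"
proof (cases "p > 0")
  case True
  with assms have "log b p \<le> - real k" by auto
  then have "b powr log b p \<le> b powr (- real k)"
    using \<open>1 < b\<close> by (intro powr_mono) auto
  with True \<open>1 < b\<close> show ?thesis
    by (simp add: powr_minus powr_realpow power_one_over inverse_eq_divide)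
qed (use assms in auto)

lemma nn_integral_not_barron_le_1:
  fixes U :: "nat list \<Rightarrow> 'a::countable list option" and P :: "'a list \<Rightarrow> real"
  assumes D: "D \<ge> 2" and U: "universal_prefix_machine D U" and P_nonneg: "\<And>x. 0 \<le> P x"
  shows "(\<integral>\<^sup>+x. ennreal (P x)
           \<partial>count_space {x. \<not> (P x > 0 \<and> real (Kc U x) + log (real D) (P x) > 0)}) \<le> 1"
proof (rule nn_integral_count_space_le_finite_sums)
  fix F assume F: "finite F" "F \<subseteq> {x. \<not> (P x > 0 \<and> real (Kc U x) + log (real D) (P x) > 0)}"
  have "(\<Sum>x\<in>F. ennreal (P x)) \<le> (\<Sum>x\<in>F. ennreal ((1/real D)^Kc U x))"
    using F D P_nonneg by (intro sum_mono ennreal_leI le_one_over_power_if_not_pos_log) auto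
  also have "\<dots> = ennreal (\<Sum>x\<in>F. (1/real D)^Kc U x)"
    by (rule sum_ennreal) simp
  also have "\<dots> \<le> 1"
    using sum_Kc_le_1[OF U _ F(1)] D by (simp add: ennreal_le_1)
  finally show "(\<Sum>x\<in>F. ennreal (P x)) \<le> 1" .
qed (rule countableI_type)

section \<open>Cylinders and Borel-Cantelli along prefixes\<close>

lemma space_seq_space: "space seq_space = UNIV"
  by (simp add: seq_space_def space_PiM)

lemma length_pre [simp]: "length (pre \<omega> n) = n"
  by (simp add: pre_def)

lemma nth_pre [simp]: "i < n \<Longrightarrow> pre \<omega> n ! i = \<omega> i"
  by (simp add: pre_def)

lemma cyl_sets: "cyl x \<in> sets seq_space"
proof -
  have coord: "{\<omega>::nat\<Rightarrow>'a. \<omega> i = x ! i} \<in> sets seq_space" for i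
  proof -
    have "(\<lambda>\<omega>::nat\<Rightarrow>'a. \<omega> i) \<in> seq_space \<rightarrow>\<^sub>M count_space UNIV"
      unfolding seq_space_def by (rule measurable_component_singleton) simp
    from measurable_sets[OF this, of "{x ! i}"] show ?thesis
      by (simp add: space_seq_space vimage_def)
  qed
  have "cyl x = space seq_space \<inter> (\<Inter>i<length x. {\<omega>. \<omega> i = x ! i})"
    by (auto simp: cyl_def space_seq_space list_eq_iff_nth_eq)
  also have "\<dots> \<in> sets seq_space"
    using coord by (cases "length x = 0") (auto intro!: sets.finite_INT)
  finally show ?thesis .
qed

lemma pre_sets: "{\<omega>. pre \<omega> n \<in> B} \<in> sets (seq_space :: (nat \<Rightarrow> 'a::countable) measure)"
proof -
  have "{\<omega>. pre \<omega> n \<in> B} = (\<Union>x\<in>{x\<in>B. length x = n}. cyl x)"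
    by (auto simp: cyl_def)
  also have "\<dots> \<in> sets seq_space"
    by (intro sets.countable_UN') (auto simp: cyl_sets)
  finally show ?thesis .
qed

lemma barron_random_sets:
  fixes U :: "nat list \<Rightarrow> 'a::countable list option"
  shows "barron_random D U P \<in> sets seq_space"
proof -
  define G where "G = {x. P x > 0 \<and> real (Kc U x) + log (real D) (P x) > 0}"
  have "barron_random D U P = {\<omega> \<in> space seq_space. eventually (\<lambda>n. pre \<omega> n \<in> G) sequentially}"
    by (simp add: barron_random_def space_seq_space G_def)
  also have "\<dots> \<in> sets seq_space"
    using pre_sets[of _ G] by (intro sets_Collect_eventually_sequentially) (simp add: space_seq_space)
  finally show ?thesis .
qed

text \<open>Each \<omega> lies in exactly one cylinder of every length, so the number of indices n with
  a prefix in B equals the number of words of B whose cylinder contains \<omega>.\<close>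
lemma suminf_indicator_pre_eq:
  fixes \<omega> :: "nat \<Rightarrow> 'a" and B :: "'a list set"
  shows "(\<Sum>n. indicator {\<omega>. pre \<omega> n \<in> B} \<omega> :: ennreal)
       = (\<integral>\<^sup>+x. indicator (cyl x) \<omega> \<partial>count_space B)"
proof -
  define N where "N = {n. pre \<omega> n \<in> B}"
  define C where "C = {x\<in>B. \<omega> \<in> cyl x}"
  have bij: "bij_betw (pre \<omega>) N C"
    unfolding bij_betw_def N_def C_def
    by (auto simp: inj_on_def cyl_def image_iff) (metis length_pre)+
  have "(\<Sum>n. indicator {\<omega>. pre \<omega> n \<in> B} \<omega> :: ennreal)
      = (\<integral>\<^sup>+n. indicator N n \<partial>count_space UNIV)"
    by (simp add: nn_integral_count_space_nat N_def indicator_def)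
  also have "\<dots> = emeasure (count_space UNIV) C"
    using bij_betw_finite[OF bij] bij_betw_same_card[OF bij]
    by (simp add: emeasure_count_space)
  also have "\<dots> = (\<integral>\<^sup>+x. indicator C x \<partial>count_space UNIV)" by simp
  also have "\<dots> = (\<integral>\<^sup>+x. indicator (cyl x) \<omega> \<partial>count_space B)"
    by (simp add: nn_integral_count_space_indicator C_def indicator_def) (rule nn_integral_cong; auto)
  finally show ?thesis .
qed

lemma suminf_emeasure_pre_eq:
  fixes M :: "(nat \<Rightarrow> 'a::countable) measure" and B :: "'a list set"
  assumes sets_M: "sets M = sets seq_space"
  shows "(\<Sum>n. emeasure M {\<omega>. pre \<omega> n \<in> B}) = (\<integral>\<^sup>+x. emeasure M (cyl x) \<partial>count_space B)"
proof -
  have [measurable]: "{\<omega>. pre \<omega> n \<in> B} \<in> sets M" "cyl x \<in> sets M" for n x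
    using sets_M pre_sets cyl_sets by auto
  have "(\<Sum>n. emeasure M {\<omega>. pre \<omega> n \<in> B}) = (\<integral>\<^sup>+\<omega>. (\<Sum>n. indicator {\<omega>. pre \<omega> n \<in> B} \<omega>) \<partial>M)"
    by (simp add: nn_integral_suminf)
  also have "\<dots> = (\<integral>\<^sup>+\<omega>. (\<integral>\<^sup>+x. indicator (cyl x) \<omega> \<partial>count_space B) \<partial>M)"
    by (simp add: suminf_indicator_pre_eq)
  also have "\<dots> = (\<integral>\<^sup>+x. emeasure M (cyl x) \<partial>count_space B)"
    by (subst nn_integral_count_space_nn_integral) (auto intro: countableI_type)
  finally show ?thesis .
qed

lemma AE_eventually_pre_notin:
  fixes M :: "(nat \<Rightarrow> 'a::countable) measure" and B :: "'a list set"
  assumes "prob_space M" and sets_M: "sets M = sets seq_space"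
    and fin: "(\<Sum>n. emeasure M {\<omega>. pre \<omega> n \<in> B}) \<noteq> \<infinity>"
  shows "AE \<omega> in M. eventually (\<lambda>n. pre \<omega> n \<notin> B) sequentially"
proof -
  interpret prob_space M by fact
  have [measurable]: "{\<omega>. pre \<omega> n \<in> B} \<in> sets M" for n
    using sets_M pre_sets by auto
  have "summable (\<lambda>n. measure M {\<omega>. pre \<omega> n \<in> B})"
    using fin by (intro summable_suminf_not_top) (auto simp: emeasure_eq_measure)
  moreover have "emeasure M {\<omega>. pre \<omega> n \<in> B} < \<infinity>" for n
    by (simp add: emeasure_eq_measure)
  ultimately show ?thesis
    using borel_cantelli_AE1[of "\<lambda>n. {\<omega>. pre \<omega> n \<in> B}"]
    by (auto elim!: AE_mp eventually_mono)
qed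

section \<open>Mixtures\<close>

lemma nn_integral_emeasure_mixture:
  fixes pi :: "'b measure" and Ptheta :: "'b \<Rightarrow> 'a measure"
  assumes "prob_space pi" and P: "Ptheta \<in> pi \<rightarrow>\<^sub>M prob_algebra M" and B: "B \<in> sets M"
  shows "(\<integral>\<^sup>+\<theta>. emeasure (Ptheta \<theta>) B \<partial>pi) = ennreal (\<integral>\<theta>. measure (Ptheta \<theta>) B \<partial>pi)"
proof -
  interpret pi: prob_space pi by fact
  have Pth: "prob_space (Ptheta \<theta>)" if "\<theta> \<in> space pi" for \<theta>
    using measurable_space[OF P that] by (simp add: space_prob_algebra)
  have meas: "(\<lambda>\<theta>. measure (Ptheta \<theta>) B) \<in> borel_measurable pi"
    using measurable_compose[OF measurable_prob_algebraD[OF P]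
        measurable_measure_subprob_algebra[OF B]] .
  have "(\<integral>\<^sup>+\<theta>. emeasure (Ptheta \<theta>) B \<partial>pi) = (\<integral>\<^sup>+\<theta>. ennreal (measure (Ptheta \<theta>) B) \<partial>pi)"
    using Pth by (intro nn_integral_cong) (simp add: prob_space_def finite_measure.emeasure_eq_measure)
  also have "\<dots> = ennreal (\<integral>\<theta>. measure (Ptheta \<theta>) B \<partial>pi)"
  proof (intro nn_integral_eq_integral pi.integrable_const_bound[where B=1] AE_I2 meas)
    show "norm (measure (Ptheta \<theta>) B) \<le> 1" if "\<theta> \<in> space pi" for \<theta>
      using prob_space.prob_le_1[OF Pth[OF that]] by simp
  qed simp
  finally show ?thesis .
qed

lemma AE_mixture_eventually_pre_notin:
  fixes pi :: "'b measure" and Ptheta :: "'b \<Rightarrow> (nat \<Rightarrow> 'a::countable) measure"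
    and B :: "'a list set"
  assumes pi: "prob_space pi" and P: "Ptheta \<in> pi \<rightarrow>\<^sub>M prob_algebra seq_space"
    and fin: "(\<integral>\<^sup>+x. ennreal (\<integral>\<theta>. measure (Ptheta \<theta>) (cyl x) \<partial>pi) \<partial>count_space B) \<noteq> \<infinity>"
  shows "AE \<theta> in pi. AE \<omega> in Ptheta \<theta>. eventually (\<lambda>n. pre \<omega> n \<notin> B) sequentially"
proof -
  have Pth: "prob_space (Ptheta \<theta>) \<and> sets (Ptheta \<theta>) = sets seq_space" if "\<theta> \<in> space pi" for \<theta>
    using measurable_space[OF P that] by (simp add: space_prob_algebra)
  have emeasure_meas: "(\<lambda>\<theta>. emeasure (Ptheta \<theta>) X) \<in> borel_measurable pi"
    if "X \<in> sets seq_space" for X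
    using measurable_compose[OF measurable_prob_algebraD[OF P]
        measurable_emeasure_subprob_algebra[OF that]] .
  define S where "S \<theta> = (\<Sum>n. emeasure (Ptheta \<theta>) {\<omega>. pre \<omega> n \<in> B})" for \<theta>
  have "S \<in> borel_measurable pi"
    unfolding S_def by (intro borel_measurable_suminf_order emeasure_meas pre_sets)
  moreover have "(\<integral>\<^sup>+\<theta>. S \<theta> \<partial>pi) \<noteq> \<infinity>"
  proof -
    have "(\<integral>\<^sup>+\<theta>. S \<theta> \<partial>pi) = (\<integral>\<^sup>+\<theta>. \<integral>\<^sup>+x. emeasure (Ptheta \<theta>) (cyl x) \<partial>count_space B \<partial>pi)"
      by (intro nn_integral_cong) (simp add: S_def suminf_emeasure_pre_eq Pth)
    also have "\<dots> = (\<integral>\<^sup>+x. \<integral>\<^sup>+\<theta>. emeasure (Ptheta \<theta>) (cyl x) \<partial>pi \<partial>count_space B)"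
      by (rule nn_integral_count_space_nn_integral) (auto intro: emeasure_meas cyl_sets countableI_type)
    also have "\<dots> = (\<integral>\<^sup>+x. ennreal (\<integral>\<theta>. measure (Ptheta \<theta>) (cyl x) \<partial>pi) \<partial>count_space B)"
      by (simp add: nn_integral_emeasure_mixture[OF pi P cyl_sets])
    finally show ?thesis using fin by simp
  qed
  ultimately have "AE \<theta> in pi. S \<theta> \<noteq> \<infinity>"
    by (rule nn_integral_noteq_infinite)
  then show ?thesis
    using AE_space by eventually_elim (simp add: S_def AE_eventually_pre_notin Pth)
qed

theorem corollary2:
  fixes D :: nat
    and U :: "nat list \<Rightarrow> 'a::countable list option"
    and pi :: "'b measure"
    and Ptheta :: "'b \<Rightarrow> (nat \<Rightarrow> 'a) measure"
  assumes "D \<ge> 2"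
    and "universal_prefix_machine D U"
    and "prob_space pi"
    and "Ptheta \<in> pi \<rightarrow>\<^sub>M prob_algebra seq_space"
  shows "AE \<theta> in pi. emeasure (Ptheta \<theta>)
           (barron_random D U (\<lambda>xs. \<integral>\<theta>'. measure (Ptheta \<theta>') (cyl xs) \<partial>pi)) = 1"
proof -
  define P where "P = (\<lambda>xs. \<integral>\<theta>'. measure (Ptheta \<theta>') (cyl xs) \<partial>pi)"
  define Bad where "Bad = {x. \<not> (P x > 0 \<and> real (Kc U x) + log (real D) (P x) > 0)}"
  have barron_eq: "barron_random D U P = {\<omega>. eventually (\<lambda>n. pre \<omega> n \<notin> Bad) sequentially}"
    by (simp add: barron_random_def Bad_def)
  have "0 \<le> P x" for x
    unfolding P_def by (rule Bochner_Integration.integral_nonneg) simp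
  with assms(1,2) have "(\<integral>\<^sup>+x. ennreal (P x) \<partial>count_space Bad) \<le> 1"
    unfolding Bad_def by (rule nn_integral_not_barron_le_1)
  then have "AE \<theta> in pi. AE \<omega> in Ptheta \<theta>. eventually (\<lambda>n. pre \<omega> n \<notin> Bad) sequentially"
    using assms(3,4) unfolding P_def by (intro AE_mixture_eventually_pre_notin) (auto simp: top_unique)
  then show ?thesis
    using AE_space unfolding P_def[symmetric]
  proof eventually_elim
    case (elim \<theta>)
    with measurable_space[OF assms(4)] have "prob_space (Ptheta \<theta>)" "sets (Ptheta \<theta>) = sets seq_space"
      by (auto simp: space_prob_algebra)
    moreover have "AE \<omega> in Ptheta \<theta>. \<omega> \<in> barron_random D U P"
      using elim(1) by (simp add: barron_eq)
    ultimately show ?case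
      by (intro prob_space.emeasure_eq_1_AE) (simp_all add: barron_random_sets)
  qed
qed

end
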